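(* Let $L$ be a finite monolithic primitive group whose socle $N$ is non-abelian, let $k'$ be a positive integer, and let $L_{k'}$ be the crown-based power of $L$ of size $k'$, whose socle is $N^{k'}$. If $H'$ is a core-free subgroup of $L_{k'}$ with $H'\le N^{k'}$, then $|N^{k'}:H'|\ge 5^{k'}$.
   Context: All groups are finite. A group $L$ is primitive if it has a maximal subgroup with trivial core; it is monolithic primitive if moreover it has a unique minimal normal subgroup, its socle $N=\mathrm{soc}(L)$. For a positive integer $k$, the crown-based power of $L$ of size $k$ is $L_k:=\{(l_1,\ldots,l_k)\in L^k\mid l_1\equiv\cdots\equiv l_k \pmod N\}=N^k\,\mathrm{diag}(L^k)$. A subgroup $H'$ of a group $G$ is core-free if $\bigcap_{g\in G}(H')^g=1$. *)

theory Defs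
  imports "HOL-Algebra.Algebra"
begin

definition maximal_subgroup :: "'a set \<Rightarrow> ('a, 'b) monoid_scheme \<Rightarrow> bool" where
  "maximal_subgroup M G \<longleftrightarrow> subgroup M G \<and> M \<noteq> carrier G \<and>
     (\<forall>K. subgroup K G \<longrightarrow> M \<subseteq> K \<longrightarrow> K = M \<or> K = carrier G)"

definition core :: "('a, 'b) monoid_scheme \<Rightarrow> 'a set \<Rightarrow> 'a set" where
  "core G H = (\<Inter>g\<in>carrier G. (g <#\<^bsub>G\<^esub> H) #>\<^bsub>G\<^esub> inv\<^bsub>G\<^esub> g)"

definition core_free :: "'a set \<Rightarrow> ('a, 'b) monoid_scheme \<Rightarrow> bool" where
  "core_free H G \<longleftrightarrow> core G H = {\<one>\<^bsub>G\<^esub>}"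

definition minimal_normal :: "'a set \<Rightarrow> ('a, 'b) monoid_scheme \<Rightarrow> bool" where
  "minimal_normal N G \<longleftrightarrow> N \<lhd> G \<and> N \<noteq> {\<one>\<^bsub>G\<^esub>} \<and>
     (\<forall>K. K \<lhd> G \<longrightarrow> K \<subseteq> N \<longrightarrow> K = {\<one>\<^bsub>G\<^esub>} \<or> K = N)"

definition primitive_group :: "('a, 'b) monoid_scheme \<Rightarrow> bool" where
  "primitive_group G \<longleftrightarrow> (\<exists>M. maximal_subgroup M G \<and> core_free M G)"

definition monolithic_primitive_with_socle :: "('a, 'b) monoid_scheme \<Rightarrow> 'a set \<Rightarrow> bool" where
  "monolithic_primitive_with_socle G N \<longleftrightarrow> primitive_group G \<and> minimal_normal N G \<and>
     (\<forall>K. minimal_normal K G \<longrightarrow> K = N)"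

definition crown_based_power :: "('a, 'b) monoid_scheme \<Rightarrow> 'a set \<Rightarrow> nat \<Rightarrow> (nat \<Rightarrow> 'a) monoid" where
  "crown_based_power L N k =
     (product_group {..<k} (\<lambda>_. L))
       \<lparr>carrier := {x \<in> carrier (product_group {..<k} (\<lambda>_. L)).
                     \<forall>i<k. \<forall>j<k. N #>\<^bsub>L\<^esub> x i = N #>\<^bsub>L\<^esub> x j}\<rparr>"

definition power_set :: "'a set \<Rightarrow> nat \<Rightarrow> (nat \<Rightarrow> 'a) set" where
  "power_set N k = PiE {..<k} (\<lambda>_. N)"

end

theory Submission
  imports Defs
begin

text \<open>
  The socle \<open>N\<close>, a non-abelian minimal normal subgroup, is perfect. A perfect group has no
  proper subgroup of index at most 4: acting on its cosets it would map to \<open>S\<^sub>4\<close>, whose derived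
  series \<open>S\<^sub>4 > A\<^sub>4 > V\<^sub>4 > 1\<close> (checked by computation on permutation lists) ends in the trivial
  group. Hence proper subgroups of \<open>N\<close> have index at least 5, and a non-trivial perfect group
  has order at least 25 (Sylow), so proper normal subgroups of \<open>N\<close> have index at least 25.

  Core-freeness of \<open>H\<close> means that \<open>H\<close> contains none of the coordinate copies \<open>N\<^sub>j\<close> of \<open>N\<close>.
  For such a subgroup \<open>Y \<le> N\<^sup>r\<close> argue by induction on \<open>r\<close>. If some projection \<open>\<pi>\<^sub>j(Y)\<close> is
  proper, then \<open>|Y| = |\<pi>\<^sub>j(Y)| |Y \<inter> ker \<pi>\<^sub>j|\<close> loses a factor 5 in one coordinate. If all
  projections are onto, then for some \<open>l \<noteq> j\<close> the projection of \<open>Y \<inter> ker \<pi>\<^sub>j\<close> to coordinate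
  \<open>l\<close> is a proper normal subgroup of \<open>N\<close>, losing a factor 25 in two coordinates; otherwise
  commutators of suitable elements of \<open>Y\<close> fill all of \<open>N\<^sub>j\<close>, since \<open>N\<close> is perfect.
\<close>

section \<open>Perfect groups\<close>

definition perfect :: "('a, 'b) monoid_scheme \<Rightarrow> bool" where
  "perfect G \<longleftrightarrow> derived G (carrier G) = carrier G"

lemma (in group) perfect_subgroup_eq:
  assumes "perfect G" and "subgroup S G" and "derived_set G (carrier G) \<subseteq> S"
  shows "S = carrier G"
  using generate_subgroup_incl[OF assms(3,2)] subgroup.subset[OF assms(2)] assms(1)
  unfolding perfect_def derived_def by blast

lemma perfect_surj_hom_image:
  assumes "group_hom G H h" and "h ` carrier G = carrier H" and "perfect G"
  shows "perfect H"
  using group_hom.derived_img[OF assms(1), of "carrier G"] assms(2,3)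
  unfolding perfect_def by simp

lemma (in normal) perfect_FactGroup:
  assumes "perfect G"
  shows "perfect (G Mod H)"
proof (rule perfect_surj_hom_image[OF _ _ assms])
  show "group_hom G (G Mod H) ((#>) H)"
    using factorgroup_is_group r_coset_hom_Mod by (simp add: group_hom_def group_hom_axioms_def is_group)
  show "(#>) H ` carrier G = carrier (G Mod H)"
    unfolding carrier_FactGroup RCOSETS_def by blast
qed

lemma (in group) perfect_nontrivial_not_comm:
  assumes "perfect G" and "carrier G \<noteq> {\<one>}"
  shows "\<exists>a\<in>carrier G. \<exists>b\<in>carrier G. a \<otimes> b \<noteq> b \<otimes> a"
proof (rule ccontr)
  assume "\<not> ?thesis"
  then have "comm_group G"
    by (intro group_comm_groupI) auto
  then have "derived G (carrier G) = {\<one>}"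
    by (rule comm_group.derived_eq_singleton) simp
  then show False
    using assms unfolding perfect_def by simp
qed

lemma (in group) minimal_normal_nonabelian_perfect:
  assumes min: "minimal_normal N G" and nonabelian: "\<exists>x\<in>N. \<exists>y\<in>N. x \<otimes> y \<noteq> y \<otimes> x"
  shows "perfect (G\<lparr>carrier := N\<rparr>)"
proof -
  have N: "N \<lhd> G"
    using min unfolding minimal_normal_def by blast
  have N_sub: "subgroup N G"
    using N normal_imp_subgroup by blast
  have "derived G N \<noteq> {\<one>}"
  proof
    assume trivial: "derived G N = {\<one>}"
    obtain x y where xy: "x \<in> N" "y \<in> N" "x \<otimes> y \<noteq> y \<otimes> x"
      using nonabelian by blast
    then have "x \<in> carrier G" "y \<in> carrier G"
      using subgroup.subset[OF N_sub] by auto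
    moreover have "x \<otimes> y \<otimes> inv x \<otimes> inv y \<in> derived G N"
      unfolding derived_def using xy by (blast intro: generate.incl)
    ultimately have "x \<otimes> y = x \<otimes> y \<otimes> inv x \<otimes> inv y \<otimes> y \<otimes> x"
      by (simp add: m_assoc)
    also have "\<dots> = y \<otimes> x"
      using trivial \<open>x \<in> carrier G\<close> \<open>y \<in> carrier G\<close> \<open>x \<otimes> y \<otimes> inv x \<otimes> inv y \<in> derived G N\<close> by simp
    finally show False
      using xy by simp
  qed
  moreover have "derived G N \<lhd> G" and "derived G N \<subseteq> N"
    using derived_is_normal[OF N] derived_incl[OF _ N_sub] by auto
  ultimately have "derived G N = N"
    using min unfolding minimal_normal_def by blast
  then show ?thesis
    unfolding perfect_def using derived_consistent[OF _ N_sub] by simp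
qed

definition perm_comp :: "nat list \<Rightarrow> nat list \<Rightarrow> nat list" where
  "perm_comp s t = map ((!) s) t"

definition perms4 :: "nat list list" where
  "perms4 = filter distinct (List.n_lists 4 [0..<4])"

definition alt4 :: "nat list list" where
  "alt4 = [[0,1,2,3], [0,2,3,1], [0,3,1,2], [1,0,3,2], [1,2,0,3], [1,3,2,0],
           [2,0,1,3], [2,1,3,0], [2,3,0,1], [3,0,2,1], [3,1,0,2], [3,2,1,0]]"

definition klein4 :: "nat list list" where
  "klein4 = [[0,1,2,3], [1,0,3,2], [2,3,0,1], [3,2,1,0]]"

definition perm_subgroup :: "nat list list \<Rightarrow> bool" where
  "perm_subgroup Ys \<longleftrightarrow> [0,1,2,3] \<in> set Ys \<and> (\<forall>s\<in>set Ys. \<forall>t\<in>set Ys. perm_comp s t \<in> set Ys) \<and>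
     (\<forall>s\<in>set Ys. \<forall>c\<in>set perms4. perm_comp c s = [0,1,2,3] \<longrightarrow> c \<in> set Ys)"

text \<open>The equation \<open>c t s = s t\<close> says that \<open>c\<close> is the commutator \<open>s t s\<^sup>-\<^sup>1 t\<^sup>-\<^sup>1\<close>.\<close>
definition commutators_within :: "nat list list \<Rightarrow> nat list list \<Rightarrow> bool" where
  "commutators_within Xs Ys \<longleftrightarrow> (\<forall>s\<in>set Xs. \<forall>t\<in>set Xs. \<forall>c\<in>set perms4.
     perm_comp (perm_comp c t) s = perm_comp s t \<longrightarrow> c \<in> set Ys)"

lemma set_perms4: "set perms4 = {xs. length xs = 4 \<and> distinct xs \<and> set xs \<subseteq> {0..<4}}"
  by (auto simp: perms4_def set_n_lists)

lemma derived_series_perms4: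
  "commutators_within perms4 alt4" "commutators_within alt4 klein4"
  "commutators_within klein4 [[0,1,2,3]]"
  "perm_subgroup alt4" "perm_subgroup klein4" "perm_subgroup [[0,1,2,3]]"
  by code_simp+

lemma (in group) perfect_perm_image_descends:
  fixes perm :: "'a \<Rightarrow> nat list"
  assumes perf: "perfect G"
    and perm_mult: "\<And>a b. a \<in> carrier G \<Longrightarrow> b \<in> carrier G \<Longrightarrow> perm (a \<otimes> b) = perm_comp (perm a) (perm b)"
    and perm_one: "perm \<one> = [0,1,2,3]"
    and perm_perms4: "\<And>a. a \<in> carrier G \<Longrightarrow> perm a \<in> set perms4"
    and Xs: "\<forall>a\<in>carrier G. perm a \<in> set Xs"
    and comm: "commutators_within Xs Ys" and sub: "perm_subgroup Ys"
  shows "\<forall>a\<in>carrier G. perm a \<in> set Ys"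
proof -
  let ?S = "{a \<in> carrier G. perm a \<in> set Ys}"
  have "subgroup ?S G"
  proof
    show "x \<otimes> y \<in> ?S" if "x \<in> ?S" "y \<in> ?S" for x y
      using that sub by (auto simp: perm_subgroup_def perm_mult)
    show "inv x \<in> ?S" if "x \<in> ?S" for x
    proof -
      have "perm_comp (perm (inv x)) (perm x) = [0,1,2,3]"
        using that by (simp flip: perm_mult add: perm_one)
      then show ?thesis
        using that sub perm_perms4[of "inv x"] by (auto simp: perm_subgroup_def)
    qed
  qed (use sub perm_one in \<open>auto simp: perm_subgroup_def\<close>)
  moreover have "derived_set G (carrier G) \<subseteq> ?S"
  proof
    fix c assume "c \<in> derived_set G (carrier G)"
    then obtain a b where ab: "a \<in> carrier G" "b \<in> carrier G" and c: "c = a \<otimes> b \<otimes> inv a \<otimes> inv b"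
      by blast
    then have "c \<otimes> b \<otimes> a = a \<otimes> b"
      by (simp add: m_assoc)
    then have "perm_comp (perm_comp (perm c) (perm b)) (perm a) = perm_comp (perm a) (perm b)"
      using ab c by (simp flip: perm_mult)
    then show "c \<in> ?S"
      using comm Xs ab c perm_perms4[of c] by (auto simp: commutators_within_def)
  qed
  ultimately show ?thesis
    using perfect_subgroup_eq[OF perf] by blast
qed

lemma (in group) perfect_fixes_four_points:
  fixes \<sigma> :: "'a \<Rightarrow> nat \<Rightarrow> nat"
  assumes perf: "perfect G"
    and closed: "\<And>a i. a \<in> carrier G \<Longrightarrow> i < 4 \<Longrightarrow> \<sigma> a i < 4"
    and mult: "\<And>a b i. a \<in> carrier G \<Longrightarrow> b \<in> carrier G \<Longrightarrow> i < 4 \<Longrightarrow> \<sigma> (a \<otimes> b) i = \<sigma> a (\<sigma> b i)"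
    and one: "\<And>i. i < 4 \<Longrightarrow> \<sigma> \<one> i = i"
    and a: "a \<in> carrier G" and i: "i < 4"
  shows "\<sigma> a i = i"
proof -
  define perm where "perm a = map (\<sigma> a) [0..<4]" for a
  have perm_mult: "perm (a \<otimes> b) = perm_comp (perm a) (perm b)" if "a \<in> carrier G" "b \<in> carrier G" for a b
    using that closed[of b] by (auto simp: perm_def perm_comp_def mult)
  have perm_one: "perm \<one> = [0,1,2,3]"
    by (simp add: perm_def one upt_rec)
  have perm_perms4: "perm a \<in> set perms4" if a: "a \<in> carrier G" for a
  proof -
    have "inj_on (\<sigma> a) {0..<4}"
      by (rule inj_on_inverseI[where g = "\<sigma> (inv a)"]) (use a in \<open>simp add: one flip: mult\<close>)
    then show ?thesis
      using closed[OF a] by (auto simp: set_perms4 perm_def distinct_map)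
  qed
  have descend: "\<forall>a\<in>carrier G. perm a \<in> set Ys"
    if "\<forall>a\<in>carrier G. perm a \<in> set Xs" "commutators_within Xs Ys" "perm_subgroup Ys" for Xs Ys
    by (rule perfect_perm_image_descends[OF perf _ perm_one _ that]) (simp_all add: perm_mult perm_perms4)
  have "\<forall>a\<in>carrier G. perm a \<in> set [[0,1,2,3]]"
    using descend[OF descend[OF descend[OF _ derived_series_perms4(1,4)] derived_series_perms4(2,5)]
        derived_series_perms4(3,6)] perm_perms4 by blast
  then have "map (\<sigma> a) [0..<4] = [0..<4]"
    using a by (simp add: perm_def upt_rec)
  then show ?thesis
    using i by (metis add_0 diff_zero length_upt nth_map nth_upt)
qed

lemma (in group) perfect_fixes_small_set:
  fixes \<phi> :: "'a \<Rightarrow> 'e \<Rightarrow> 'e"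
  assumes perf: "perfect G" and E: "finite E" "card E \<le> 4"
    and closed: "\<And>a x. a \<in> carrier G \<Longrightarrow> x \<in> E \<Longrightarrow> \<phi> a x \<in> E"
    and mult: "\<And>a b x. a \<in> carrier G \<Longrightarrow> b \<in> carrier G \<Longrightarrow> x \<in> E \<Longrightarrow> \<phi> (a \<otimes> b) x = \<phi> a (\<phi> b x)"
    and one: "\<And>x. x \<in> E \<Longrightarrow> \<phi> \<one> x = x"
    and a: "a \<in> carrier G" and x: "x \<in> E"
  shows "\<phi> a x = x"
proof -
  obtain e where e: "bij_betw e {0..<card E} E"
    using ex_bij_betw_nat_finite[OF E(1)] by blast
  let ?e' = "inv_into {0..<card E} e"
  have e'_range: "?e' y < card E" if "y \<in> E" for y
    using bij_betwE[OF bij_betw_inv_into[OF e]] that by auto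
  define \<sigma> where "\<sigma> a i = (if i < card E then ?e' (\<phi> a (e i)) else i)" for a i
  have e_range: "e i \<in> E" if "i < card E" for i
    using bij_betwE[OF e] that by auto
  have "\<sigma> a (?e' x) = ?e' x"
  proof (rule perfect_fixes_four_points[OF perf])
    show "\<sigma> a i < 4" if "a \<in> carrier G" "i < 4" for a i
    proof (cases "i < card E")
      case True
      then show ?thesis
        using E(2) e'_range[OF closed[OF that(1) e_range[OF True]]] by (simp add: \<sigma>_def)
    qed (use that in \<open>simp add: \<sigma>_def\<close>)
    show "\<sigma> (a \<otimes> b) i = \<sigma> a (\<sigma> b i)" if "a \<in> carrier G" "b \<in> carrier G" "i < 4" for a b i
      using that e_range closed e'_range by (auto simp: \<sigma>_def mult bij_betw_inv_into_right[OF e])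
    show "\<sigma> \<one> i = i" if "i < 4" for i
      using e_range by (simp add: \<sigma>_def one bij_betw_inv_into_left[OF e])
  qed (use a E(2) e'_range[OF x] in auto)
  then show ?thesis
    using x e'_range[OF x] closed[OF a x] by (metis \<sigma>_def bij_betw_inv_into_right[OF e])
qed

lemma (in group) perfect_index_ge_5:
  assumes fin: "finite (carrier G)" and perf: "perfect G"
    and K: "subgroup K G" and proper: "K \<noteq> carrier G"
  shows "5 \<le> card (rcosets K)"
proof (rule ccontr)
  assume small: "\<not> 5 \<le> card (rcosets K)"
  have Kc: "K \<subseteq> carrier G"
    using K subgroup.subset by blast
  have "inv a \<in> K" if a: "a \<in> carrier G" for a
  proof -
    have "K #> inv a = K"
    proof (rule perfect_fixes_small_set[OF perf, where \<phi> = "\<lambda>a C. C #> inv a"])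
      show "finite (rcosets K)"
        using rcosets_subset_PowG[OF K] fin by (meson finite_Pow_iff finite_subset)
      show "C #> inv a \<in> rcosets K" if "a \<in> carrier G" "C \<in> rcosets K" for a C
        using that Kc unfolding RCOSETS_def by (auto simp: coset_mult_assoc)
      show "C #> inv (a \<otimes> b) = C #> inv b #> inv a"
        if "a \<in> carrier G" "b \<in> carrier G" "C \<in> rcosets K" for a b C
        using that Kc unfolding RCOSETS_def by (auto simp: coset_mult_assoc inv_mult_group m_assoc)
      show "C #> inv \<one> = C" if "C \<in> rcosets K" for C
        using that Kc unfolding RCOSETS_def by (auto simp: coset_mult_assoc)
    qed (use small a subgroup.subgroup_in_rcosets[OF K is_group] in auto)
    then show ?thesis
      using rcos_self[OF inv_closed[OF a] K] by simp
  qed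
  then have "carrier G \<subseteq> K"
    using K by (metis inv_inv subgroup.m_inv_closed subsetI)
  then show False
    using proper Kc by blast
qed

corollary (in group) perfect_proper_subgroup_card:
  assumes "finite (carrier G)" and "perfect G" and "subgroup K G" and "K \<noteq> carrier G"
  shows "5 * card K \<le> order G"
  using perfect_index_ge_5[OF assms] lagrange[OF assms(3)] by (metis mult_le_mono1)

lemma (in group) exponent_two_imp_commute:
  assumes sq: "\<And>g. g \<in> carrier G \<Longrightarrow> g \<otimes> g = \<one>" and x: "x \<in> carrier G" and y: "y \<in> carrier G"
  shows "x \<otimes> y = y \<otimes> x"
proof -
  have inv_self: "inv g = g" if "g \<in> carrier G" for g
    using inv_equality[OF sq[OF that] that that] .
  have "x \<otimes> y = inv (x \<otimes> y)"
    using x y by (simp add: inv_self)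
  also have "\<dots> = inv y \<otimes> inv x"
    using x y by (simp add: inv_mult_group)
  also have "\<dots> = y \<otimes> x"
    using x y by (simp add: inv_self)
  finally show ?thesis .
qed

lemma (in group) not_comm_imp_ord_ge_3:
  assumes fin: "finite (carrier G)"
    and "a \<in> carrier G" and "b \<in> carrier G" and "a \<otimes> b \<noteq> b \<otimes> a"
  shows "\<exists>g\<in>carrier G. 3 \<le> ord g"
proof (rule ccontr)
  assume small: "\<not> ?thesis"
  have "g \<otimes> g = \<one>" if g: "g \<in> carrier G" for g
  proof -
    have "ord g = 1 \<or> ord g = 2"
      using small ord_ge_1[OF fin g] g by force
    then show ?thesis
    proof
      assume "ord g = 2"
      then show ?thesis
        using pow_ord_eq_1[OF g] g by (simp add: numeral_2_eq_2)
    qed (use ord_eq_1[OF g] in simp)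
  qed
  then show False
    using exponent_two_imp_commute assms by blast
qed

lemma (in group) perfect_ord_bound:
  assumes fin: "finite (carrier G)" and perf: "perfect G" and nontriv: "carrier G \<noteq> {\<one>}"
    and g: "g \<in> carrier G"
  shows "5 * ord g \<le> order G"
proof -
  obtain a b where ab: "a \<in> carrier G" "b \<in> carrier G" "a \<otimes> b \<noteq> b \<otimes> a"
    using perfect_nontrivial_not_comm[OF perf nontriv] by blast
  have "generate G {g} \<noteq> carrier G"
  proof
    assume "generate G {g} = carrier G"
    then obtain i j :: nat where "a = g [^] i" "b = g [^] j"
      using ab generate_pow_on_finite_carrier[OF fin g] by blast
    then show False
      using ab g by (simp add: nat_pow_mult add.commute)
  qed
  then show ?thesis
    using perfect_proper_subgroup_card[OF fin perf generate_is_subgroup] generate_pow_card[OF g] g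
    by simp
qed

lemma (in group) perfect_sylow_bound:
  assumes fin: "finite (carrier G)" and perf: "perfect G"
    and p: "Factorial_Ring.prime p" and split: "order G = p ^ e * m" and "m \<noteq> 1"
  shows "5 * p ^ e \<le> order G"
proof -
  obtain P where P: "subgroup P G" "card P = p ^ e"
    using sylow_thm[OF p is_group split fin] by blast
  have "P \<noteq> carrier G"
    using split P(2) \<open>m \<noteq> 1\<close> prime_gt_0_nat[OF p] unfolding order_def by auto
  then show ?thesis
    using perfect_proper_subgroup_card[OF fin perf P(1)] P(2) by simp
qed

lemma (in group) perfect_order_ge_25:
  assumes fin: "finite (carrier G)" and perf: "perfect G" and nontriv: "carrier G \<noteq> {\<one>}"
  shows "25 \<le> order G"
proof (rule ccontr)
  assume small: "\<not> 25 \<le> order G"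
  obtain g where g: "g \<in> carrier G" "3 \<le> ord g"
    using not_comm_imp_ord_ge_3[OF fin] perfect_nontrivial_not_comm[OF perf nontriv] by blast
  note ord_bound = perfect_ord_bound[OF fin perf nontriv g(1)]
  have "ord g = 3 \<or> ord g = 4"
    using ord_bound g(2) small by linarith
  then have "(ord g = 3 \<and> 3 dvd order G) \<or> (ord g = 4 \<and> 4 dvd order G)"
    using ord_dvd_group_order[OF g(1)] by auto
  then have "order G = 15 \<or> order G = 18 \<or> order G = 20 \<or> order G = 21 \<or> order G = 24"
    using ord_bound small by presburger
  then show False
    using perfect_sylow_bound[OF fin perf, of 5 1 3] perfect_sylow_bound[OF fin perf, of 3 2 2]
      perfect_sylow_bound[OF fin perf, of 5 1 4] perfect_sylow_bound[OF fin perf, of 7 1 3]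
      perfect_sylow_bound[OF fin perf, of 2 3 3]
    by auto
qed

lemma (in group) perfect_normal_subgroup_card:
  assumes fin: "finite (carrier G)" and perf: "perfect G"
    and B: "B \<lhd> G" and proper: "B \<noteq> carrier G"
  shows "25 * card B \<le> order G"
proof -
  interpret B: normal B G
    by (rule B)
  have "25 \<le> order (G Mod B)"
  proof (rule group.perfect_order_ge_25)
    show "group (G Mod B)"
      by (rule B.factorgroup_is_group)
    show "finite (carrier (G Mod B))"
      using rcosets_subset_PowG[OF B.is_subgroup] fin by (simp add: carrier_FactGroup)
    show "perfect (G Mod B)"
      by (rule B.perfect_FactGroup[OF perf])
    show "carrier (G Mod B) \<noteq> {\<one>\<^bsub>G Mod B\<^esub>}"
      using B.fact_group_trivial_iff[OF fin] proper by simp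
  qed
  moreover have "order (G Mod B) * card B = order G"
    using lagrange[OF B.is_subgroup] by (simp add: order_def FactGroup_def)
  ultimately show ?thesis
    by (metis mult_le_mono1)
qed

section \<open>Subgroups of direct powers\<close>

lemma (in group_hom) card_image_mult_card_kernel:
  assumes "finite (carrier G)"
  shows "card (h ` carrier G) * card (kernel G H h) = order G"
proof -
  interpret img: group_hom G "H\<lparr>carrier := h ` carrier G\<rparr>" h
    using induced_group_hom[OF G.subgroup_self] by simp
  have "G Mod kernel G H h \<cong> H\<lparr>carrier := h ` carrier G\<rparr>"
    using img.FactGroup_iso by (simp add: kernel_def)
  then have "card (rcosets kernel G H h) = card (h ` carrier G)"
    by (auto dest: iso_same_card simp: FactGroup_def)
  then show ?thesis
    using G.lagrange[OF subgroup_kernel] by simp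
qed

lemma pow_mult_le_step:
  fixes a n c c' r s :: nat
  assumes "a ^ s * c \<le> n ^ s * c'" and "a ^ r * c' \<le> n ^ r"
  shows "a ^ (r + s) * c \<le> n ^ (r + s)"
proof -
  have "a ^ (r + s) * c = a ^ r * (a ^ s * c)"
    by (simp add: power_add mult.assoc)
  also have "\<dots> \<le> a ^ r * (n ^ s * c')"
    using assms(1) by simp
  also have "\<dots> = n ^ s * (a ^ r * c')"
    by simp
  also have "\<dots> \<le> n ^ s * n ^ r"
    using assms(2) by simp
  finally show ?thesis
    by (simp add: power_add mult.commute)
qed

definition single_coord :: "('a, 'b) monoid_scheme \<Rightarrow> 'i set \<Rightarrow> 'i \<Rightarrow> 'a \<Rightarrow> 'i \<Rightarrow> 'a" where
  "single_coord G I j a = (\<lambda>i\<in>I. if i = j then a else \<one>\<^bsub>G\<^esub>)"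

locale direct_power = group G for G (structure) +
  fixes I :: "'i set"
begin

abbreviation P :: "('i \<Rightarrow> 'a) monoid" where
  "P \<equiv> product_group I (\<lambda>_. G)"

definition trivial_on :: "'i set \<Rightarrow> ('i \<Rightarrow> 'a) set \<Rightarrow> ('i \<Rightarrow> 'a) set" where
  "trivial_on U Y = {y \<in> Y. \<forall>u\<in>U. y u = \<one>}"

lemma P_group: "group P"
  by (simp add: is_group)

lemma coord_mult [simp]: "i \<in> I \<Longrightarrow> (x \<otimes>\<^bsub>P\<^esub> y) i = x i \<otimes> y i"
  by simp

lemma coord_inv [simp]: "x \<in> carrier P \<Longrightarrow> i \<in> I \<Longrightarrow> (inv\<^bsub>P\<^esub> x) i = inv (x i)"
  by (simp add: is_group)

lemma coord_carrier: "x \<in> carrier P \<Longrightarrow> i \<in> I \<Longrightarrow> x i \<in> carrier G"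
  by auto

lemma coord_group_hom:
  assumes "subgroup Y P" and "j \<in> I"
  shows "group_hom (P\<lparr>carrier := Y\<rparr>) G (\<lambda>y. y j)"
proof -
  have "group (P\<lparr>carrier := Y\<rparr>)"
    by (rule subgroup.subgroup_is_group[OF assms(1) P_group])
  moreover have "(\<lambda>y. y j) \<in> hom (P\<lparr>carrier := Y\<rparr>) G"
    using subgroup.subset[OF assms(1)] assms(2) by (force simp: hom_def)
  ultimately show ?thesis
    by (simp add: group_hom_def group_hom_axioms_def is_group)
qed

lemma kernel_coord:
  "kernel (P\<lparr>carrier := Y\<rparr>) G (\<lambda>y. y j) = trivial_on {j} Y"
  by (auto simp: kernel_def trivial_on_def)

lemma coord_image_subgroup:
  assumes "subgroup Y P" and "j \<in> I"
  shows "subgroup ((\<lambda>y. y j) ` Y) G"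
  using group_hom.img_is_subgroup[OF coord_group_hom[OF assms]] by simp

lemma card_coord_split:
  assumes "subgroup Y P" and "j \<in> I" and "finite Y"
  shows "card Y = card ((\<lambda>y. y j) ` Y) * card (trivial_on {j} Y)"
  using group_hom.card_image_mult_card_kernel[OF coord_group_hom[OF assms(1,2)]] assms(3)
  by (simp add: kernel_coord order_def)

lemma subgroup_trivial_on:
  assumes Y: "subgroup Y P" and U: "U \<subseteq> I"
  shows "subgroup (trivial_on U Y) P"
proof
  have Yc: "Y \<subseteq> carrier P"
    using subgroup.subset[OF Y] .
  show "trivial_on U Y \<subseteq> carrier P"
    using Yc by (auto simp: trivial_on_def)
  show "x \<otimes>\<^bsub>P\<^esub> y \<in> trivial_on U Y" if "x \<in> trivial_on U Y" "y \<in> trivial_on U Y" for x y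
    using that U subgroup.m_closed[OF Y] by (auto simp: trivial_on_def subset_iff)
  show "\<one>\<^bsub>P\<^esub> \<in> trivial_on U Y"
    using U subgroup.one_closed[OF Y] by (auto simp: trivial_on_def subset_iff)
  show "inv\<^bsub>P\<^esub> x \<in> trivial_on U Y" if "x \<in> trivial_on U Y" for x
    using that U Yc subgroup.m_inv_closed[OF Y] by (auto simp: trivial_on_def subset_iff)
qed

lemma commutator_trivial_on_Un:
  assumes Y: "subgroup Y P" and UV: "U \<subseteq> I" "V \<subseteq> I"
    and x: "x \<in> trivial_on U Y" and z: "z \<in> trivial_on V Y"
  shows "x \<otimes>\<^bsub>P\<^esub> z \<otimes>\<^bsub>P\<^esub> inv\<^bsub>P\<^esub> x \<otimes>\<^bsub>P\<^esub> inv\<^bsub>P\<^esub> z \<in> trivial_on (U \<union> V) Y"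
    (is "?c \<in> _")
proof -
  have xz: "x \<in> Y" "z \<in> Y" "x \<in> carrier P" "z \<in> carrier P"
    using x z subgroup.subset[OF Y] by (auto simp: trivial_on_def)
  have coord: "?c i = x i \<otimes> z i \<otimes> inv (x i) \<otimes> inv (z i)" if "i \<in> I" for i
    using that xz by simp
  have "?c \<in> Y"
    using xz by (intro subgroup.m_closed[OF Y] subgroup.m_inv_closed[OF Y])
  moreover have "?c u = \<one>" if u: "u \<in> U \<union> V" for u
  proof -
    have "u \<in> I"
      using u UV by blast
    then have xzu: "x u \<in> carrier G" "z u \<in> carrier G"
      using coord_carrier xz by auto
    consider "x u = \<one>" | "z u = \<one>"
      using u x z by (auto simp: trivial_on_def)
    then show ?thesis
      unfolding coord[OF \<open>u \<in> I\<close>] using xzu by cases simp_all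
  qed
  ultimately show ?thesis
    by (simp add: trivial_on_def)
qed

definition coord_free_subgroup :: "'i set \<Rightarrow> ('i \<Rightarrow> 'a) set \<Rightarrow> bool" where
  "coord_free_subgroup R Y \<longleftrightarrow> subgroup Y P \<and> R \<subseteq> I \<and> (\<forall>y\<in>Y. \<forall>i\<in>I - R. y i = \<one>) \<and>
     (\<forall>j\<in>R. \<not> single_coord G I j ` carrier G \<subseteq> Y)"

lemma coord_free_subgroup_trivial_on:
  assumes "coord_free_subgroup R Y" and "U \<subseteq> R"
  shows "coord_free_subgroup (R - U) (trivial_on U Y)"
  using assms subgroup_trivial_on[of Y U] unfolding coord_free_subgroup_def trivial_on_def by blast

lemma card_le_one_if_trivial:
  assumes Y: "subgroup Y P" and trivial: "\<forall>y\<in>Y. \<forall>i\<in>I. y i = \<one>"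
  shows "card Y \<le> 1"
proof -
  have "Y \<subseteq> {\<one>\<^bsub>P\<^esub>}"
  proof
    fix y assume "y \<in> Y"
    moreover have "y \<in> carrier P"
      using \<open>y \<in> Y\<close> subgroup.subset[OF Y] by blast
    ultimately have "y = \<one>\<^bsub>P\<^esub>"
      using trivial by (auto simp: PiE_iff extensional_def)
    then show "y \<in> {\<one>\<^bsub>P\<^esub>}"
      by simp
  qed
  then show ?thesis
    using card_mono[of "{\<one>\<^bsub>P\<^esub>}" Y] by simp
qed

lemma conj_single_coord:
  assumes "g \<in> carrier P" and "j \<in> I" and "a \<in> carrier G"
  shows "inv\<^bsub>P\<^esub> g \<otimes>\<^bsub>P\<^esub> single_coord G I j a \<otimes>\<^bsub>P\<^esub> g = single_coord G I j (inv (g j) \<otimes> a \<otimes> g j)"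
proof
  fix i
  show "(inv\<^bsub>P\<^esub> g \<otimes>\<^bsub>P\<^esub> single_coord G I j a \<otimes>\<^bsub>P\<^esub> g) i = single_coord G I j (inv (g j) \<otimes> a \<otimes> g j) i"
  proof (cases "i \<in> I")
    case True
    then have "g i \<in> carrier G"
      using assms(1) by (rule coord_carrier[rotated])
    then show ?thesis
      using True assms by (simp add: single_coord_def)
  qed (simp add: single_coord_def)
qed

end

locale perfect_power = direct_power +
  assumes finite_carrier: "finite (carrier G)" and perfect: "perfect G" and finite_index: "finite I"
begin

lemma coord_full_trivial_on_Un:
  assumes Y: "subgroup Y P" and j: "j \<in> I" and UV: "U \<subseteq> I" "V \<subseteq> I"
    and fullU: "(\<lambda>y. y j) ` trivial_on U Y = carrier G"
    and fullV: "(\<lambda>y. y j) ` trivial_on V Y = carrier G"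
  shows "(\<lambda>y. y j) ` trivial_on (U \<union> V) Y = carrier G"
proof (rule perfect_subgroup_eq[OF perfect])
  show "subgroup ((\<lambda>y. y j) ` trivial_on (U \<union> V) Y) G"
    using coord_image_subgroup[OF subgroup_trivial_on[OF Y] j] UV by blast
  show "derived_set G (carrier G) \<subseteq> (\<lambda>y. y j) ` trivial_on (U \<union> V) Y"
  proof
    fix c assume "c \<in> derived_set G (carrier G)"
    then obtain a b where ab: "a \<in> carrier G" "b \<in> carrier G" and c: "c = a \<otimes> b \<otimes> inv a \<otimes> inv b"
      by blast
    have "a \<in> (\<lambda>y. y j) ` trivial_on U Y" "b \<in> (\<lambda>y. y j) ` trivial_on V Y"
      using ab fullU fullV by simp_all
    then obtain x z where x: "x \<in> trivial_on U Y" "x j = a" and z: "z \<in> trivial_on V Y" "z j = b"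
      by blast
    let ?c = "x \<otimes>\<^bsub>P\<^esub> z \<otimes>\<^bsub>P\<^esub> inv\<^bsub>P\<^esub> x \<otimes>\<^bsub>P\<^esub> inv\<^bsub>P\<^esub> z"
    have "?c \<in> trivial_on (U \<union> V) Y"
      by (rule commutator_trivial_on_Un[OF Y UV x(1) z(1)])
    moreover have "?c j = c"
      using j x z c subgroup.subset[OF Y] by (simp add: trivial_on_def subset_iff)
    ultimately show "c \<in> (\<lambda>y. y j) ` trivial_on (U \<union> V) Y"
      by blast
  qed
qed

lemma coord_full_swap:
  assumes Y: "subgroup Y P" and j: "j \<in> I" and l: "l \<in> I"
    and full: "(\<lambda>y. y j) ` Y = carrier G"
    and full_ker: "(\<lambda>y. y l) ` trivial_on {j} Y = carrier G"
  shows "(\<lambda>y. y j) ` trivial_on {l} Y = carrier G"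
proof
  show "(\<lambda>y. y j) ` trivial_on {l} Y \<subseteq> carrier G"
    unfolding full[symmetric] trivial_on_def by blast
  show "carrier G \<subseteq> (\<lambda>y. y j) ` trivial_on {l} Y"
  proof
    fix a assume "a \<in> carrier G"
    then have "a \<in> (\<lambda>y. y j) ` Y"
      unfolding full .
    then obtain y where y: "y \<in> Y" "y j = a"
      by blast
    have yc: "y \<in> carrier P"
      using y subgroup.subset[OF Y] by blast
    have "y l \<in> (\<lambda>y. y l) ` trivial_on {j} Y"
      unfolding full_ker by (rule coord_carrier[OF yc l])
    then obtain z where z: "z \<in> trivial_on {j} Y" "z l = y l"
      by (metis imageE)
    have zc: "z \<in> Y" "z \<in> carrier P" "z j = \<one>"
      using z(1) subgroup.subset[OF Y] unfolding trivial_on_def by blast+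
    let ?w = "y \<otimes>\<^bsub>P\<^esub> inv\<^bsub>P\<^esub> z"
    have "?w \<in> Y"
      using y(1) zc(1) by (intro subgroup.m_closed[OF Y] subgroup.m_inv_closed[OF Y])
    moreover have "?w l = \<one>"
      using l zc z(2) coord_carrier[OF yc l] by simp
    ultimately have "?w \<in> trivial_on {l} Y"
      by (simp add: trivial_on_def)
    moreover have "?w j = a"
      using j zc y yc coord_carrier[OF yc j] by simp
    ultimately show "a \<in> (\<lambda>y. y j) ` trivial_on {l} Y"
      by blast
  qed
qed

lemma coord_full_trivial_on:
  assumes Y: "subgroup Y P" and j: "j \<in> I" and U: "finite U" "U \<subseteq> I"
    and full: "(\<lambda>y. y j) ` Y = carrier G"
    and full_ker: "\<forall>l\<in>U. (\<lambda>y. y l) ` trivial_on {j} Y = carrier G"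
  shows "(\<lambda>y. y j) ` trivial_on U Y = carrier G"
  using U full_ker
proof (induction U rule: finite_induct)
  case empty
  then show ?case
    using full by (simp add: trivial_on_def)
next
  case (insert l U)
  have l: "{l} \<subseteq> I" "(\<lambda>y. y l) ` trivial_on {j} Y = carrier G"
    and U: "U \<subseteq> I" "\<forall>l\<in>U. (\<lambda>y. y l) ` trivial_on {j} Y = carrier G"
    using insert.prems by auto
  have "(\<lambda>y. y j) ` trivial_on {l} Y = carrier G"
    using coord_full_swap[OF Y j _ full l(2)] l(1) by simp
  then have "(\<lambda>y. y j) ` trivial_on (U \<union> {l}) Y = carrier G"
    by (rule coord_full_trivial_on_Un[OF Y j U(1) l(1) insert.IH[OF U]])
  then show ?case
    by simp
qed

lemma single_coord_subset:
  assumes Y: "subgroup Y P" and R: "R \<subseteq> I" and supp: "\<forall>y\<in>Y. \<forall>i\<in>I - R. y i = \<one>"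
    and j: "j \<in> R" and full: "(\<lambda>y. y j) ` Y = carrier G"
    and full_ker: "\<forall>l\<in>R - {j}. (\<lambda>y. y l) ` trivial_on {j} Y = carrier G"
  shows "single_coord G I j ` carrier G \<subseteq> Y"
proof -
  have "finite (R - {j})"
    using R finite_index by (meson finite_Diff finite_subset)
  then have full_on: "(\<lambda>y. y j) ` trivial_on (R - {j}) Y = carrier G"
    using coord_full_trivial_on[OF Y _ _ _ full full_ker] j R by blast
  show ?thesis
  proof
    fix x assume "x \<in> single_coord G I j ` carrier G"
    then obtain a where a: "a \<in> carrier G" "x = single_coord G I j a"
      by blast
    from a full_on have "a \<in> (\<lambda>y. y j) ` trivial_on (R - {j}) Y"
      by simp
    then obtain y where y: "a = y j" "y \<in> trivial_on (R - {j}) Y"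
      by (rule imageE)
    have "y \<in> carrier P"
      using y(2) subgroup.subset[OF Y] unfolding trivial_on_def by blast
    have "y = x"
    proof
      fix i
      show "y i = x i"
      proof (cases "i \<in> I")
        case True
        then show ?thesis
          using y supp a by (cases "i \<in> R") (auto simp: trivial_on_def single_coord_def)
      next
        case False
        then have "y i = undefined"
          using \<open>y \<in> carrier P\<close> PiE_arb[of y I "\<lambda>_. carrier G" i] by simp
        moreover have "x i = undefined"
          using False a(2) by (simp add: single_coord_def)
        ultimately show ?thesis
          by simp
      qed
    qed
    with y(2) show "x \<in> Y"
      unfolding trivial_on_def by blast
  qed
qed

lemma coord_image_trivial_on_normal:
  assumes Y: "subgroup Y P" and j: "j \<in> I" and l: "l \<in> I"
    and full: "(\<lambda>y. y l) ` Y = carrier G"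
  shows "(\<lambda>y. y l) ` trivial_on {j} Y \<lhd> G"
proof -
  have "trivial_on {j} Y \<lhd> P\<lparr>carrier := Y\<rparr>"
    using group_hom.normal_kernel[OF coord_group_hom[OF Y j]] by (simp add: kernel_coord)
  then show ?thesis
    using normal.surj_hom_normal_subgroup[OF _ coord_group_hom[OF Y l]] full by simp
qed

lemma finite_subgroup: "subgroup Y P \<Longrightarrow> finite Y"
  using subgroup.subset finite_carrier finite_index by (metis carrier_product_group finite_PiE finite_subset)

lemma card_le_proper_coord:
  assumes Y: "subgroup Y P" and j: "j \<in> I" and proper: "(\<lambda>y. y j) ` Y \<noteq> carrier G"
  shows "5 * card Y \<le> order G * card (trivial_on {j} Y)"
  using perfect_proper_subgroup_card[OF finite_carrier perfect coord_image_subgroup[OF Y j] proper]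
    card_coord_split[OF Y j finite_subgroup[OF Y]]
  by (metis mult.assoc mult_le_mono1)

lemma card_le_full_coords:
  assumes Y: "subgroup Y P" and j: "j \<in> I" and l: "l \<in> I"
    and full: "(\<lambda>y. y j) ` Y = carrier G" "(\<lambda>y. y l) ` Y = carrier G"
    and proper: "(\<lambda>y. y l) ` trivial_on {j} Y \<noteq> carrier G"
  shows "25 * card Y \<le> order G ^ 2 * card (trivial_on {l} (trivial_on {j} Y))"
proof -
  let ?B = "(\<lambda>y. y l) ` trivial_on {j} Y" and ?Y2 = "trivial_on {l} (trivial_on {j} Y)"
  have Y1: "subgroup (trivial_on {j} Y) P"
    using subgroup_trivial_on[OF Y] j by blast
  have "25 * card ?B \<le> order G"
    by (rule perfect_normal_subgroup_card[OF finite_carrier perfect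
          coord_image_trivial_on_normal[OF Y j l full(2)] proper])
  moreover have "card Y = order G * (card ?B * card ?Y2)"
    using card_coord_split[OF Y j finite_subgroup[OF Y]] card_coord_split[OF Y1 l finite_subgroup[OF Y1]]
      full(1) by (simp add: order_def)
  ultimately show ?thesis
    by (simp add: power2_eq_square mult_le_mono)
qed

lemma card_coord_free_subgroup:
  assumes "coord_free_subgroup R Y"
  shows "5 ^ card R * card Y \<le> order G ^ card R"
  using assms
proof (induction "card R" arbitrary: R Y rule: less_induct)
  case less
  then have Y: "subgroup Y P" and R: "R \<subseteq> I" and supp: "\<forall>y\<in>Y. \<forall>i\<in>I - R. y i = \<one>"
    and no_coord: "\<forall>j\<in>R. \<not> single_coord G I j ` carrier G \<subseteq> Y"
    by (simp_all add: coord_free_subgroup_def)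
  have finR: "finite R"
    using R finite_index finite_subset by blast
  have IH: "5 ^ card (R - U) * card (trivial_on U Y) \<le> order G ^ card (R - U)"
    if "U \<subseteq> R" "U \<noteq> {}" for U
  proof (rule less.hyps)
    show "card (R - U) < card R"
      using that by (intro psubset_card_mono[OF finR]) blast
  qed (use coord_free_subgroup_trivial_on[OF less.prems that(1)] in simp_all)
  consider (empty) "R = {}"
    | (proper) j where "j \<in> R" "(\<lambda>y. y j) ` Y \<noteq> carrier G"
    | (full) j where "j \<in> R" "\<forall>i\<in>R. (\<lambda>y. y i) ` Y = carrier G"
    by blast
  then show ?case
  proof cases
    case empty
    then show ?thesis
      using card_le_one_if_trivial[OF Y] supp by simp
  next
    case (proper j)
    have "5 ^ 1 * card Y \<le> order G ^ 1 * card (trivial_on {j} Y)"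
      using card_le_proper_coord[OF Y _ proper(2)] proper(1) R by auto
    then have "5 ^ (card (R - {j}) + 1) * card Y \<le> order G ^ (card (R - {j}) + 1)"
      by (rule pow_mult_le_step[OF _ IH]) (use proper(1) in auto)
    moreover have "card R = card (R - {j}) + 1"
      using card_Suc_Diff1[OF finR proper(1)] by simp
    ultimately show ?thesis
      by simp
  next
    case (full j)
    obtain l where l: "l \<in> R - {j}" and proper: "(\<lambda>y. y l) ` trivial_on {j} Y \<noteq> carrier G"
      using single_coord_subset[OF Y R supp full(1)] full no_coord by blast
    have jl: "j \<in> I" "l \<in> I"
      using full(1) l R by auto
    have "(\<lambda>y. y j) ` Y = carrier G" "(\<lambda>y. y l) ` Y = carrier G"
      using full l by auto
    from card_le_full_coords[OF Y jl this proper]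
    have "5 ^ 2 * card Y \<le> order G ^ 2 * card (trivial_on {j, l} Y)"
      by (simp add: trivial_on_def conj_ac insert_commute)
    then have "5 ^ (card (R - {j, l}) + 2) * card Y \<le> order G ^ (card (R - {j, l}) + 2)"
      by (rule pow_mult_le_step[OF _ IH]) (use full(1) l in auto)
    moreover have "R - {j, l} = R - {j} - {l}"
      by blast
    then have "card R = card (R - {j, l}) + 2"
      using card_Suc_Diff1[OF finR full(1)] card_Suc_Diff1[OF finite_Diff[OF finR] l] by simp
    ultimately show ?thesis
      by simp
  qed
qed

corollary index_ge_five_pow:
  assumes Y: "subgroup Y P" and no_coord: "\<forall>j\<in>I. \<not> single_coord G I j ` carrier G \<subseteq> Y"
  shows "5 ^ card I \<le> card (rcosets\<^bsub>P\<^esub> Y)"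
proof -
  have "5 ^ card I * card Y \<le> order G ^ card I"
    using Y no_coord by (intro card_coord_free_subgroup) (simp add: coord_free_subgroup_def)
  moreover have "card (rcosets\<^bsub>P\<^esub> Y) * card Y = order G ^ card I"
    using group.lagrange[OF P_group Y] finite_index by (simp add: order_def card_PiE)
  moreover have "card Y > 0"
    using finite_subgroup[OF Y] subgroup.one_closed[OF Y] card_gt_0_iff by blast
  ultimately show ?thesis
    by (metis mult_le_cancel2)
qed

end

section \<open>Crown-based powers\<close>

lemma (in group) subgroup_equalizer:
  assumes "group H" and hom: "\<And>i. i \<in> J \<Longrightarrow> f i \<in> hom G H"
  shows "subgroup {x \<in> carrier G. \<forall>i\<in>J. \<forall>j\<in>J. f i x = f j x} G" (is "subgroup ?E G")
proof -
  have f: "group_hom G H (f i)" if "i \<in> J" for i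
    using assms that by (simp add: group_hom_def group_hom_axioms_def is_group)
  show ?thesis
  proof (rule subgroupI)
    have "\<one> \<in> ?E"
      by (simp add: group_hom.hom_one[OF f])
    then show "?E \<noteq> {}"
      by blast
    show "inv a \<in> ?E" if a: "a \<in> ?E" for a
    proof -
      have "f i (inv a) = f j (inv a)" if "i \<in> J" "j \<in> J" for i j
      proof -
        have "a \<in> carrier G" "f i a = f j a"
          using a that by blast+
        then show ?thesis
          using that by (simp add: group_hom.hom_inv[OF f])
      qed
      then show ?thesis
        using a by blast
    qed
    show "a \<otimes> b \<in> ?E" if a: "a \<in> ?E" and b: "b \<in> ?E" for a b
    proof -
      have "f i (a \<otimes> b) = f j (a \<otimes> b)" if "i \<in> J" "j \<in> J" for i j
      proof -
        have "a \<in> carrier G" "b \<in> carrier G" "f i a = f j a" "f i b = f j b"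
          using a b that by blast+
        then show ?thesis
          using that by (simp add: group_hom.hom_mult[OF f])
      qed
      then show ?thesis
        using a b by blast
    qed
  qed blast
qed

lemma crown_based_power_subgroup:
  assumes N: "N \<lhd> L"
  shows "subgroup (carrier (crown_based_power L N k)) (product_group {..<k} (\<lambda>_. L))"
proof -
  interpret N: normal N L
    by (rule N)
  have hom: "(\<lambda>x. N #>\<^bsub>L\<^esub> x i) \<in> hom (product_group {..<k} (\<lambda>_. L)) (L Mod N)" if "i \<in> {..<k}" for i
  proof (rule homI)
    show "N #>\<^bsub>L\<^esub> x i \<in> carrier (L Mod N)" if "x \<in> carrier (product_group {..<k} (\<lambda>_. L))" for x
      using that \<open>i \<in> {..<k}\<close> by (auto simp: carrier_FactGroup)
    show "N #>\<^bsub>L\<^esub> (x \<otimes>\<^bsub>product_group {..<k} (\<lambda>_. L)\<^esub> y) i = (N #>\<^bsub>L\<^esub> x i) \<otimes>\<^bsub>L Mod N\<^esub> (N #>\<^bsub>L\<^esub> y i)"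
      if "x \<in> carrier (product_group {..<k} (\<lambda>_. L))" "y \<in> carrier (product_group {..<k} (\<lambda>_. L))" for x y
    proof -
      have "x i \<in> carrier L" "y i \<in> carrier L"
        using that \<open>i \<in> {..<k}\<close> by auto
      then show ?thesis
        using \<open>i \<in> {..<k}\<close> by (simp add: N.rcos_sum)
    qed
  qed
  interpret P: group "product_group {..<k} (\<lambda>_. L)"
    by (simp add: N.is_group)
  have "carrier (crown_based_power L N k) = {x \<in> carrier (product_group {..<k} (\<lambda>_. L)).
      \<forall>i\<in>{..<k}. \<forall>j\<in>{..<k}. N #>\<^bsub>L\<^esub> x i = N #>\<^bsub>L\<^esub> x j}"
    unfolding crown_based_power_def Ball_def lessThan_iff by simp
  then show ?thesis
    using P.subgroup_equalizer[where J = "{..<k}" and f = "\<lambda>i x. N #>\<^bsub>L\<^esub> x i", OF N.factorgroup_is_group hom]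
    by simp
qed

lemma product_group_restrict_PiE:
  "(product_group I (\<lambda>_. L))\<lparr>carrier := PiE I (\<lambda>_. N)\<rparr> = product_group I (\<lambda>_. L\<lparr>carrier := N\<rparr>)"
  by (simp add: product_group_def)

lemma subgroup_crown_based_power_imp_subgroup_power:
  assumes N: "N \<lhd> L" and H: "subgroup H (crown_based_power L N k)" and HN: "H \<subseteq> power_set N k"
  shows "subgroup H (product_group {..<k} (\<lambda>_. L\<lparr>carrier := N\<rparr>))"
proof -
  interpret N: normal N L
    by (rule N)
  interpret P: group "product_group {..<k} (\<lambda>_. L)"
    by (simp add: N.is_group)
  have "crown_based_power L N k = (product_group {..<k} (\<lambda>_. L))\<lparr>carrier := carrier (crown_based_power L N k)\<rparr>"
    by (simp add: crown_based_power_def)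
  then have "subgroup H (product_group {..<k} (\<lambda>_. L))"
    using P.incl_subgroup[OF crown_based_power_subgroup[OF N]] H by metis
  moreover have "subgroup (power_set N k) (product_group {..<k} (\<lambda>_. L))"
    using PiE_subgroup_product_group[of "{..<k}" "\<lambda>_. L" "\<lambda>_. N"] N.is_group N.is_subgroup
    by (simp add: power_set_def)
  ultimately have "subgroup H ((product_group {..<k} (\<lambda>_. L))\<lparr>carrier := power_set N k\<rparr>)"
    using P.subgroup_incl HN by blast
  then show ?thesis
    by (simp add: power_set_def product_group_restrict_PiE)
qed

lemma (in group) conj_mem_coset:
  assumes "g \<in> carrier G" and "x \<in> carrier G" and "inv g \<otimes> x \<otimes> g \<in> H"
  shows "x \<in> (g <# H) #> inv g"
proof -
  have "x = g \<otimes> (inv g \<otimes> x \<otimes> g) \<otimes> inv g"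
    using assms(1,2) by (simp add: m_assoc) (simp add: m_assoc[symmetric])
  then show ?thesis
    using assms(3) unfolding l_coset_def r_coset_def by blast
qed

lemma core_free_imp_no_single_coord:
  assumes N: "N \<lhd> L" "N \<noteq> {\<one>\<^bsub>L\<^esub>}"
    and core_free: "core_free H (crown_based_power L N k)" and j: "j < k"
  shows "\<not> single_coord L {..<k} j ` N \<subseteq> H"
proof
  assume sub: "single_coord L {..<k} j ` N \<subseteq> H"
  interpret N: normal N L
    by (rule N(1))
  interpret D: direct_power L "{..<k}"
    by unfold_locales
  interpret P: group D.P
    by (rule D.P_group)
  let ?C = "crown_based_power L N k"
  have C_sub: "subgroup (carrier ?C) D.P"
    by (rule crown_based_power_subgroup[OF N(1)])
  have mult_C: "monoid.mult ?C = monoid.mult D.P" and one_C: "monoid.one ?C = monoid.one D.P"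
    by (simp_all add: crown_based_power_def)
  obtain n where n: "n \<in> N" "n \<noteq> \<one>\<^bsub>L\<^esub>"
    using N(2) subgroup.one_closed[OF N.is_subgroup] by blast
  let ?s = "single_coord L {..<k} j n"
  have s: "?s \<in> carrier D.P"
    using j n(1) N.subset by (auto simp: single_coord_def)
  have "?s \<in> core ?C H"
    unfolding core_def
  proof
    fix g assume g: "g \<in> carrier ?C"
    then have gP: "g \<in> carrier D.P"
      using subgroup.subset[OF C_sub] by blast
    have "inv\<^bsub>L\<^esub> (g j) \<otimes>\<^bsub>L\<^esub> n \<otimes>\<^bsub>L\<^esub> g j \<in> N"
      using N.inv_op_closed1[OF D.coord_carrier[OF gP] n(1)] j by simp
    then have h: "inv\<^bsub>D.P\<^esub> g \<otimes>\<^bsub>D.P\<^esub> ?s \<otimes>\<^bsub>D.P\<^esub> g \<in> H"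
      using sub D.conj_single_coord[OF gP _ subsetD[OF N.subset n(1)]] j by auto
    have "?s \<in> (g <#\<^bsub>D.P\<^esub> H) #>\<^bsub>D.P\<^esub> inv\<^bsub>D.P\<^esub> g"
      by (rule P.conj_mem_coset[OF gP s h])
    moreover have "inv\<^bsub>?C\<^esub> g = inv\<^bsub>D.P\<^esub> g"
      using P.m_inv_consistent[OF C_sub g] by (simp add: crown_based_power_def)
    ultimately show "?s \<in> (g <#\<^bsub>?C\<^esub> H) #>\<^bsub>?C\<^esub> inv\<^bsub>?C\<^esub> g"
      unfolding l_coset_def r_coset_def mult_C by simp
  qed
  then have "?s = \<one>\<^bsub>D.P\<^esub>"
    using core_free unfolding core_free_def one_C by blast
  then have "?s j = \<one>\<^bsub>L\<^esub>"
    using j by simp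
  then show False
    using n(2) j by (simp add: single_coord_def)
qed

lemma socle_perfect_power:
  assumes "group L" and "finite (carrier L)" and min: "minimal_normal N L"
    and "\<exists>x\<in>N. \<exists>y\<in>N. x \<otimes>\<^bsub>L\<^esub> y \<noteq> y \<otimes>\<^bsub>L\<^esub> x" and "finite I"
  shows "perfect_power (L\<lparr>carrier := N\<rparr>) I"
proof (intro perfect_power.intro direct_power.intro perfect_power_axioms.intro)
  have N: "subgroup N L"
    using min normal_imp_subgroup unfolding minimal_normal_def by blast
  show "group (L\<lparr>carrier := N\<rparr>)"
    by (rule subgroup.subgroup_is_group[OF N assms(1)])
  show "finite (carrier (L\<lparr>carrier := N\<rparr>))"
    using assms(2) subgroup.subset[OF N] by (simp add: finite_subset)
  show "perfect (L\<lparr>carrier := N\<rparr>)"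
    by (rule group.minimal_normal_nonabelian_perfect[OF assms(1) min assms(4)])
qed (rule assms(5))

theorem lemma2p1:
  fixes L :: "('a, 'b) monoid_scheme" and N :: "'a set" and k :: nat and H :: "(nat \<Rightarrow> 'a) set"
  assumes "group L" and "finite (carrier L)"
    and "monolithic_primitive_with_socle L N"
    and "\<exists>x\<in>N. \<exists>y\<in>N. x \<otimes>\<^bsub>L\<^esub> y \<noteq> y \<otimes>\<^bsub>L\<^esub> x"
    and "k \<ge> 1"
    and "subgroup H (crown_based_power L N k)"
    and "core_free H (crown_based_power L N k)"
    and "H \<subseteq> power_set N k"
  shows "5 ^ k \<le> card (rcosets\<^bsub>(crown_based_power L N k)\<lparr>carrier := power_set N k\<rparr>\<^esub> H)"
proof -
  have min: "minimal_normal N L"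
    using assms(3) unfolding monolithic_primitive_with_socle_def by blast
  then have N: "N \<lhd> L" "N \<noteq> {\<one>\<^bsub>L\<^esub>}"
    unfolding minimal_normal_def by blast+
  interpret perfect_power "L\<lparr>carrier := N\<rparr>" "{..<k}"
    by (rule socle_perfect_power[OF assms(1,2) min assms(4)]) simp
  have H: "subgroup H P"
    by (rule subgroup_crown_based_power_imp_subgroup_power[OF N(1) assms(6,8)])
  have "single_coord (L\<lparr>carrier := N\<rparr>) {..<k} = single_coord L {..<k}"
    by (simp add: single_coord_def fun_eq_iff)
  then have "\<forall>j\<in>{..<k}. \<not> single_coord (L\<lparr>carrier := N\<rparr>) {..<k} j ` carrier (L\<lparr>carrier := N\<rparr>) \<subseteq> H"
    using core_free_imp_no_single_coord[OF N assms(7)] by simp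
  then have "5 ^ card {..<k} \<le> card (rcosets\<^bsub>P\<^esub> H)"
    by (rule index_ge_five_pow[OF H])
  then show ?thesis
    by (simp add: crown_based_power_def power_set_def product_group_restrict_PiE)
qed

end
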